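(* Let $\Phi:\{0,1\}^n\to\{0,1\}^n$, let $\mu\in\{0,1\}^n$ be a fixed point of $\Phi$, and let $\rho\in P_n$. Then $\overline{W}(\mu)=\overline{W}[\Phi^\rho(\mu,\cdot)]=\overline{W}[\omega_\rho(\mu)]$ and $\underline{W}(\mu)=\underline{W}[\Phi^\rho(\mu,\cdot)]=\underline{W}[\omega_\rho(\mu)]$.
   Context: Let $\mathbf{B}=\{0,1\}$ (discrete topology), $n\ge1$, $\Phi:\mathbf{B}^n\to\mathbf{B}^n$. For $\nu\in\mathbf{B}^n$: $\Phi^\nu_i(\mu)=\mu_i$ if $\nu_i=0$, $=\Phi_i(\mu)$ if $\nu_i=1$; $\Phi^{\alpha^0\dots\alpha^k}=\Phi^{\alpha^k}\circ\cdots\circ\Phi^{\alpha^0}$. A sequence $(\alpha^k)_{k\in\mathbf{N}}$ in $\mathbf{B}^n$ is progressive if each $\{k:\alpha^k_i=1\}$ is infinite. $Seq$ = strictly increasing real sequences unbounded above. $P_n$ = functions $\rho:\mathbf{R}\to\mathbf{B}^n$ with $\rho(t_k)=\alpha^k$, $\rho(t)=0$ for $t\notin\{t_k\}$, $\alpha$ progressive, $(t_k)\in Seq$. Orbit: $\Phi^\rho(\mu,t)=\mu$ for $t<t_0$, $=\Phi^{\alpha^0\dots\alpha^k}(\mu)$ for $t\in[t_k,t_{k+1})$. $\omega_\rho(\mu)=\{\mu':\exists(s_k)\in Seq,\ \Phi^\rho(\mu,s_k)=\mu'$ for all large $k\}$. $\overline{W}(\mu)=\{\mu':\exists\rho'\in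 P_n,\ \omega_{\rho'}(\mu')\subset\{\mu\}\}$, $\underline{W}(\mu)=\{\mu':\forall\rho'\in P_n,\ \omega_{\rho'}(\mu')\subset\{\mu\}\}$. Basins: $\overline{W}[\Phi^\rho(\mu,\cdot)]=\{\mu':\exists\rho'\in P_n,\exists t',\forall t\ge t',\ \Phi^{\rho'}(\mu',t)=\Phi^\rho(\mu,t)\}$, $\underline{W}[\Phi^\rho(\mu,\cdot)]=\{\mu':\forall\rho'\in P_n,\exists t',\forall t\ge t',\ \Phi^{\rho'}(\mu',t)=\Phi^\rho(\mu,t)\}$, $\overline{W}[\omega_\rho(\mu)]=\{\mu':\exists\rho'\in P_n,\ \omega_{\rho'}(\mu')=\omega_\rho(\mu)\}$, $\underline{W}[\omega_\rho(\mu)]=\{\mu':\forall\rho'\in P_n,\ \omega_{\rho'}(\mu')=\omega_\rho(\mu)\}$. *)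

theory Defs
  imports Main "HOL-Library.Infinite_Set" Complex_Main
begin

text \<open>B^n is modelled as 'n \<Rightarrow> bool for a finite nonempty index type 'n (n = CARD('n) \<ge> 1).
  The zero vector is (\<lambda>_. False).\<close>

definition phi_nu :: "(('n \<Rightarrow> bool) \<Rightarrow> ('n \<Rightarrow> bool)) \<Rightarrow> ('n \<Rightarrow> bool) \<Rightarrow> ('n \<Rightarrow> bool) \<Rightarrow> ('n \<Rightarrow> bool)" where
  "phi_nu \<Phi> \<nu> \<mu> = (\<lambda>i. if \<nu> i then \<Phi> \<mu> i else \<mu> i)"

primrec phi_seq :: "(('n \<Rightarrow> bool) \<Rightarrow> ('n \<Rightarrow> bool)) \<Rightarrow> (nat \<Rightarrow> 'n \<Rightarrow> bool) \<Rightarrow> nat \<Rightarrow> ('n \<Rightarrow> bool) \<Rightarrow> ('n \<Rightarrow> bool)" where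
  "phi_seq \<Phi> \<alpha> 0 \<mu> = phi_nu \<Phi> (\<alpha> 0) \<mu>"
| "phi_seq \<Phi> \<alpha> (Suc k) \<mu> = phi_nu \<Phi> (\<alpha> (Suc k)) (phi_seq \<Phi> \<alpha> k \<mu>)"

definition progressive :: "(nat \<Rightarrow> 'n \<Rightarrow> bool) \<Rightarrow> bool" where
  "progressive \<alpha> \<longleftrightarrow> (\<forall>i. infinite {k. \<alpha> k i})"

definition Seq :: "(nat \<Rightarrow> real) set" where
  "Seq = {t. strict_mono t \<and> (\<forall>M. \<exists>k. t k > M)}"

definition is_rep :: "(real \<Rightarrow> 'n \<Rightarrow> bool) \<Rightarrow> (nat \<Rightarrow> 'n \<Rightarrow> bool) \<Rightarrow> (nat \<Rightarrow> real) \<Rightarrow> bool" where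
  "is_rep \<rho> \<alpha> t \<longleftrightarrow> progressive \<alpha> \<and> t \<in> Seq \<and> (\<forall>k. \<rho> (t k) = \<alpha> k)
      \<and> (\<forall>s. s \<notin> range t \<longrightarrow> \<rho> s = (\<lambda>_. False))"

definition Pn :: "(real \<Rightarrow> 'n \<Rightarrow> bool) set" where
  "Pn = {\<rho>. \<exists>\<alpha> t. is_rep \<rho> \<alpha> t}"

definition orbit_rep :: "(('n \<Rightarrow> bool) \<Rightarrow> ('n \<Rightarrow> bool)) \<Rightarrow> (nat \<Rightarrow> 'n \<Rightarrow> bool) \<Rightarrow> (nat \<Rightarrow> real) \<Rightarrow> ('n \<Rightarrow> bool) \<Rightarrow> real \<Rightarrow> ('n \<Rightarrow> bool)" where
  "orbit_rep \<Phi> \<alpha> t \<mu> s = (if s < t 0 then \<mu> else phi_seq \<Phi> \<alpha> (GREATEST k. t k \<le> s) \<mu>)"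

text \<open>The orbit \<Phi>^\<rho>(\<mu>, s); it does not depend on the chosen representation of \<rho> \<in> Pn.\<close>
definition orbit :: "(('n \<Rightarrow> bool) \<Rightarrow> ('n \<Rightarrow> bool)) \<Rightarrow> (real \<Rightarrow> 'n \<Rightarrow> bool) \<Rightarrow> ('n \<Rightarrow> bool) \<Rightarrow> real \<Rightarrow> ('n \<Rightarrow> bool)" where
  "orbit \<Phi> \<rho> \<mu> s = (let (\<alpha>, t) = (SOME p. is_rep \<rho> (fst p) (snd p)) in orbit_rep \<Phi> \<alpha> t \<mu> s)"

definition omega :: "(('n \<Rightarrow> bool) \<Rightarrow> ('n \<Rightarrow> bool)) \<Rightarrow> (real \<Rightarrow> 'n \<Rightarrow> bool) \<Rightarrow> ('n \<Rightarrow> bool) \<Rightarrow> ('n \<Rightarrow> bool) set" where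
  "omega \<Phi> \<rho> \<mu> = {\<mu>'. \<exists>s \<in> Seq. \<exists>K. \<forall>k\<ge>K. orbit \<Phi> \<rho> \<mu> (s k) = \<mu>'}"

definition W_up :: "(('n \<Rightarrow> bool) \<Rightarrow> ('n \<Rightarrow> bool)) \<Rightarrow> ('n \<Rightarrow> bool) \<Rightarrow> ('n \<Rightarrow> bool) set" where
  "W_up \<Phi> \<mu> = {\<mu>'. \<exists>\<rho>' \<in> Pn. omega \<Phi> \<rho>' \<mu>' \<subseteq> {\<mu>}}"

definition W_low :: "(('n \<Rightarrow> bool) \<Rightarrow> ('n \<Rightarrow> bool)) \<Rightarrow> ('n \<Rightarrow> bool) \<Rightarrow> ('n \<Rightarrow> bool) set" where
  "W_low \<Phi> \<mu> = {\<mu>'. \<forall>\<rho>' \<in> Pn. omega \<Phi> \<rho>' \<mu>' \<subseteq> {\<mu>}}"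

definition W_up_orbit :: "(('n \<Rightarrow> bool) \<Rightarrow> ('n \<Rightarrow> bool)) \<Rightarrow> (real \<Rightarrow> 'n \<Rightarrow> bool) \<Rightarrow> ('n \<Rightarrow> bool) \<Rightarrow> ('n \<Rightarrow> bool) set" where
  "W_up_orbit \<Phi> \<rho> \<mu> = {\<mu>'. \<exists>\<rho>' \<in> Pn. \<exists>t'. \<forall>t\<ge>t'. orbit \<Phi> \<rho>' \<mu>' t = orbit \<Phi> \<rho> \<mu> t}"

definition W_low_orbit :: "(('n \<Rightarrow> bool) \<Rightarrow> ('n \<Rightarrow> bool)) \<Rightarrow> (real \<Rightarrow> 'n \<Rightarrow> bool) \<Rightarrow> ('n \<Rightarrow> bool) \<Rightarrow> ('n \<Rightarrow> bool) set" where
  "W_low_orbit \<Phi> \<rho> \<mu> = {\<mu>'. \<forall>\<rho>' \<in> Pn. \<exists>t'. \<forall>t\<ge>t'. orbit \<Phi> \<rho>' \<mu>' t = orbit \<Phi> \<rho> \<mu> t}"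

definition W_up_omega :: "(('n \<Rightarrow> bool) \<Rightarrow> ('n \<Rightarrow> bool)) \<Rightarrow> (real \<Rightarrow> 'n \<Rightarrow> bool) \<Rightarrow> ('n \<Rightarrow> bool) \<Rightarrow> ('n \<Rightarrow> bool) set" where
  "W_up_omega \<Phi> \<rho> \<mu> = {\<mu>'. \<exists>\<rho>' \<in> Pn. omega \<Phi> \<rho>' \<mu>' = omega \<Phi> \<rho> \<mu>}"

definition W_low_omega :: "(('n \<Rightarrow> bool) \<Rightarrow> ('n \<Rightarrow> bool)) \<Rightarrow> (real \<Rightarrow> 'n \<Rightarrow> bool) \<Rightarrow> ('n \<Rightarrow> bool) \<Rightarrow> ('n \<Rightarrow> bool) set" where
  "W_low_omega \<Phi> \<rho> \<mu> = {\<mu>'. \<forall>\<rho>' \<in> Pn. omega \<Phi> \<rho>' \<mu>' = omega \<Phi> \<rho> \<mu>}"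

end

theory Submission
  imports Defs
begin

text \<open>At a fixed point \<mu> every orbit \<Phi>^\<rho>(\<mu>, \<cdot>) is constantly \<mu>, hence \<omega>_\<rho>(\<mu>) = {\<mu>}. Since the state
  space is finite, a trajectory f has \<omega>-limit set contained in (equal to) {\<mu>} exactly when it is
  eventually equal to \<mu>: every other state is then visited only on a bounded set of times, and
  finitely many bounds have a common upper bound. Hence all three kinds of basin coincide.\<close>

definition omega_limit_set :: "(real \<Rightarrow> 'a) \<Rightarrow> 'a set" where
  "omega_limit_set f = {x. \<exists>s \<in> Seq. \<exists>K. \<forall>k\<ge>K. f (s k) = x}"

lemma omega_eq_omega_limit_set: "omega \<Phi> \<rho> \<mu> = omega_limit_set (orbit \<Phi> \<rho> \<mu>)"
  unfolding omega_def omega_limit_set_def ..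

lemma frequently_at_top_real_iff: "(\<exists>\<^sub>F t in at_top. P (t::real)) \<longleftrightarrow> (\<forall>M. \<exists>t>M. P t)"
  unfolding frequently_def eventually_at_top_dense by auto

lemma Seq_exceeds:
  assumes "s \<in> Seq"
  shows "\<exists>k\<ge>K. s k > M"
proof -
  from assms obtain k where "s k > M" and "strict_mono s"
    unfolding Seq_def by blast
  then have "s (max k K) > M"
    using strict_mono_less_eq[of s k "max k K"] by simp
  then show ?thesis by (intro exI[of _ "max k K"]) simp
qed

text \<open>Each next time is chosen beyond both the previous one and its own index, which makes the
  sequence strictly increasing and unbounded.\<close>
lemma Seq_through_frequent_times:
  assumes "\<exists>\<^sub>F t in at_top. P (t::real)"
  obtains s where "s \<in> Seq" and "\<And>k. P (s k)"
proof -
  have "\<forall>M. \<exists>t>M. P t"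
    using assms unfolding frequently_at_top_real_iff .
  then obtain g where g: "\<And>M. g M > M \<and> P (g M)"
    by metis
  define s where "s = rec_nat (g 0) (\<lambda>k sk. g (max sk (real (Suc k))))"
  have s_0: "s 0 = g 0" and s_Suc: "s (Suc k) = g (max (s k) (real (Suc k)))" for k
    by (simp_all add: s_def)
  have s_increasing: "s k < s (Suc k)" for k
    using g[of "max (s k) (real (Suc k))"] s_Suc[of k] by simp
  have s_large: "real k < s k" for k
  proof (cases k)
    case 0
    then show ?thesis using g[of 0] s_0 by simp
  next
    case (Suc m)
    then show ?thesis using g[of "max (s m) (real (Suc m))"] s_Suc[of m] by simp
  qed
  have "s \<in> Seq"
    unfolding Seq_def
  proof (intro CollectI conjI allI)
    show "strict_mono s"
      using s_increasing by (simp add: strict_mono_Suc_iff)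
    show "\<exists>k. s k > M" for M
    proof -
      obtain k where "M < real k"
        using reals_Archimedean2 by blast
      then show ?thesis
        using s_large[of k] by (intro exI[of _ k]) linarith
    qed
  qed
  moreover have "P (s k)" for k
    using g by (cases k) (simp_all only: s_0 s_Suc)
  ultimately show ?thesis
    by (rule that)
qed

lemma mem_omega_limit_set_iff: "x \<in> omega_limit_set f \<longleftrightarrow> (\<exists>\<^sub>F t in at_top. f t = x)"
proof
  assume "x \<in> omega_limit_set f"
  then obtain s K where "s \<in> Seq" and "\<forall>k\<ge>K. f (s k) = x"
    unfolding omega_limit_set_def by blast
  then have "\<exists>t>M. f t = x" for M
    using Seq_exceeds[of s K M] by blast
  then show "\<exists>\<^sub>F t in at_top. f t = x"
    unfolding frequently_at_top_real_iff by blast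
next
  assume "\<exists>\<^sub>F t in at_top. f t = x"
  then show "x \<in> omega_limit_set f"
  proof (rule Seq_through_frequent_times)
    fix s
    assume "s \<in> Seq" and "\<And>k. f (s k) = x"
    then show ?thesis
      unfolding omega_limit_set_def by blast
  qed
qed

lemma omega_limit_set_subset_singleton_iff:
  "omega_limit_set (f :: real \<Rightarrow> 'a::finite) \<subseteq> {x} \<longleftrightarrow> (\<forall>\<^sub>F t in at_top. f t = x)"
proof
  assume subset: "omega_limit_set f \<subseteq> {x}"
  have "\<forall>\<^sub>F t in at_top. y \<noteq> x \<longrightarrow> f t \<noteq> y" for y
  proof (cases "y = x")
    case False
    then have "\<not> (\<exists>\<^sub>F t in at_top. f t = y)"
      using subset unfolding mem_omega_limit_set_iff[symmetric] by blast
    then show ?thesis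
      unfolding not_frequently by (rule eventually_mono) simp
  qed simp
  then have "\<forall>\<^sub>F t in at_top. \<forall>y. y \<noteq> x \<longrightarrow> f t \<noteq> y"
    by (rule eventually_all_finite)
  then show "\<forall>\<^sub>F t in at_top. f t = x"
    by (rule eventually_mono) blast
next
  assume eventually_x: "\<forall>\<^sub>F t in at_top. f t = x"
  show "omega_limit_set f \<subseteq> {x}"
  proof
    fix y
    assume "y \<in> omega_limit_set f"
    then have frequently_y: "\<exists>\<^sub>F t in at_top. f t = y"
      unfolding mem_omega_limit_set_iff .
    show "y \<in> {x}"
    proof (rule ccontr)
      assume "y \<notin> {x}"
      then have "\<forall>\<^sub>F t in at_top. f t \<noteq> y"
        using eventually_x by (simp add: eventually_mono)
      then show False
        using frequently_y by (simp add: not_frequently[symmetric])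
    qed
  qed
qed

lemma omega_limit_set_eq_singleton_iff:
  "omega_limit_set (f :: real \<Rightarrow> 'a::finite) = {x} \<longleftrightarrow> (\<forall>\<^sub>F t in at_top. f t = x)"
proof
  assume "\<forall>\<^sub>F t in at_top. f t = x"
  moreover from this have "x \<in> omega_limit_set f"
    unfolding mem_omega_limit_set_iff by (simp add: eventually_frequently)
  ultimately show "omega_limit_set f = {x}"
    using omega_limit_set_subset_singleton_iff by blast
qed (use omega_limit_set_subset_singleton_iff in blast)

lemma phi_seq_fixed_point: "\<Phi> \<mu> = \<mu> \<Longrightarrow> phi_seq \<Phi> \<alpha> k \<mu> = \<mu>"
  by (induction k) (simp_all add: phi_nu_def)

lemma orbit_fixed_point: "\<Phi> \<mu> = \<mu> \<Longrightarrow> orbit \<Phi> \<rho> \<mu> t = \<mu>"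
  unfolding orbit_def orbit_rep_def by (simp add: phi_seq_fixed_point split: prod.split)

theorem theorem53:
  fixes \<Phi> :: "('n::finite \<Rightarrow> bool) \<Rightarrow> ('n \<Rightarrow> bool)"
    and \<mu> :: "'n \<Rightarrow> bool"
    and \<rho> :: "real \<Rightarrow> 'n \<Rightarrow> bool"
  assumes "\<Phi> \<mu> = \<mu>"
    and "\<rho> \<in> Pn"
  shows "W_up \<Phi> \<mu> = W_up_orbit \<Phi> \<rho> \<mu> \<and> W_up_orbit \<Phi> \<rho> \<mu> = W_up_omega \<Phi> \<rho> \<mu>
       \<and> W_low \<Phi> \<mu> = W_low_orbit \<Phi> \<rho> \<mu> \<and> W_low_orbit \<Phi> \<rho> \<mu> = W_low_omega \<Phi> \<rho> \<mu>"
proof -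
  have orbit_const: "orbit \<Phi> \<rho> \<mu> t = \<mu>" for t
    using assms(1) by (rule orbit_fixed_point)
  then have omega_fixed: "omega \<Phi> \<rho> \<mu> = {\<mu>}"
    unfolding omega_eq_omega_limit_set omega_limit_set_eq_singleton_iff by simp
  have "omega \<Phi> \<rho>' \<mu>' \<subseteq> {\<mu>} \<longleftrightarrow> (\<exists>T. \<forall>t\<ge>T. orbit \<Phi> \<rho>' \<mu>' t = \<mu>)"
    and "omega \<Phi> \<rho>' \<mu>' = {\<mu>} \<longleftrightarrow> (\<exists>T. \<forall>t\<ge>T. orbit \<Phi> \<rho>' \<mu>' t = \<mu>)" for \<rho>' \<mu>'
    unfolding omega_eq_omega_limit_set omega_limit_set_subset_singleton_iff
      omega_limit_set_eq_singleton_iff eventually_at_top_linorder by (rule refl)+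
  then show ?thesis
    unfolding W_up_def W_up_orbit_def W_up_omega_def W_low_def W_low_orbit_def W_low_omega_def
      omega_fixed orbit_const by simp
qed

end
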